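(* Let $G$ be a finite non-abelian group. If the non-centralizer graph $\Upsilon_G$ is regular, then $G/Z(G)$ is an elementary abelian $2$-group.
   Context: For a finite group $G$, $C_G(x)$ denotes the centralizer of $x\in G$ and $Z(G)$ the center. The non-centralizer graph $\Upsilon_G$ is the simple graph with vertex set $G$ in which two distinct vertices $x,y$ are adjacent if and only if $C_G(x)\neq C_G(y)$. A graph is regular if all its vertices have the same degree. *)

theory Defs
  imports "HOL-Algebra.Algebra"
begin

definition centralizer :: "('a, 'b) monoid_scheme \<Rightarrow> 'a \<Rightarrow> 'a set" where
  "centralizer G x = {y \<in> carrier G. y \<otimes>\<^bsub>G\<^esub> x = x \<otimes>\<^bsub>G\<^esub> y}"

definition center :: "('a, 'b) monoid_scheme \<Rightarrow> 'a set" where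
  "center G = {z \<in> carrier G. \<forall>y \<in> carrier G. z \<otimes>\<^bsub>G\<^esub> y = y \<otimes>\<^bsub>G\<^esub> z}"

definition noncentralizer_adj :: "('a, 'b) monoid_scheme \<Rightarrow> 'a \<Rightarrow> 'a \<Rightarrow> bool" where
  "noncentralizer_adj G x y \<longleftrightarrow> x \<noteq> y \<and> centralizer G x \<noteq> centralizer G y"

definition noncentralizer_degree :: "('a, 'b) monoid_scheme \<Rightarrow> 'a \<Rightarrow> nat" where
  "noncentralizer_degree G x = card {y \<in> carrier G. noncentralizer_adj G x y}"

definition noncentralizer_graph_regular :: "('a, 'b) monoid_scheme \<Rightarrow> bool" where
  "noncentralizer_graph_regular G \<longleftrightarrow>
     (\<forall>x \<in> carrier G. \<forall>y \<in> carrier G. noncentralizer_degree G x = noncentralizer_degree G y)"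

definition elementary_abelian_2_group :: "('a, 'b) monoid_scheme \<Rightarrow> bool" where
  "elementary_abelian_2_group H \<longleftrightarrow> comm_group H \<and>
     (\<forall>x \<in> carrier H. x [^]\<^bsub>H\<^esub> (2::nat) = \<one>\<^bsub>H\<^esub>)"

end

theory Submission
  imports Defs
begin

text \<open>
  A vertex x of the non-centralizer graph is adjacent exactly to the vertices outside its
  centralizer class, the elements with the same centralizer as x; so regularity says that all
  centralizer classes have the size of the class of 1, which is Z(G). The class of x contains
  the coset Z(G) x, hence equals it. Since x and x\<inverse> have the same centralizer,
  x\<inverse> \<in> Z(G) x, i.e. x \<cdot> x \<in> Z(G). A group of exponent 2 is abelian.
\<close>

definition centralizer_class :: "('a, 'b) monoid_scheme \<Rightarrow> 'a \<Rightarrow> 'a set" where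
  "centralizer_class G x = {y \<in> carrier G. centralizer G y = centralizer G x}"

lemma centralizer_class_subset: "centralizer_class G x \<subseteq> carrier G"
  unfolding centralizer_class_def by blast

lemma noncentralizer_degree_eq:
  assumes "finite (carrier G)"
  shows "noncentralizer_degree G x = card (carrier G) - card (centralizer_class G x)"
proof -
  have "{y \<in> carrier G. noncentralizer_adj G x y} = carrier G - centralizer_class G x"
    unfolding centralizer_class_def noncentralizer_adj_def by auto
  then show ?thesis
    unfolding noncentralizer_degree_def
    using card_Diff_subset[OF finite_subset[OF centralizer_class_subset assms] centralizer_class_subset]
    by simp
qed

lemma card_centralizer_class_eq_if_regular:
  assumes fin: "finite (carrier G)" and reg: "noncentralizer_graph_regular G"
    and x: "x \<in> carrier G" and y: "y \<in> carrier G"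
  shows "card (centralizer_class G x) = card (centralizer_class G y)"
proof -
  have "noncentralizer_degree G x = noncentralizer_degree G y"
    using reg x y unfolding noncentralizer_graph_regular_def by blast
  then have "card (carrier G) - card (centralizer_class G x)
      = card (carrier G) - card (centralizer_class G y)"
    by (simp only: noncentralizer_degree_eq[OF fin])
  moreover have "card (centralizer_class G u) \<le> card (carrier G)" for u
    using card_mono[OF fin centralizer_class_subset] .
  ultimately show ?thesis
    by (metis diff_diff_cancel)
qed

lemma (in monoid) nat_pow_two: "x \<in> carrier G \<Longrightarrow> x [^] (2::nat) = x \<otimes> x"
  by (simp add: numeral_2_eq_2)

context group
begin

lemma center_subset: "center G \<subseteq> carrier G"
  unfolding center_def by blast

lemma commute_mult:
  assumes a: "a \<in> carrier G" and b: "b \<in> carrier G" and y: "y \<in> carrier G"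
    and ay: "a \<otimes> y = y \<otimes> a" and "b \<otimes> y = y \<otimes> b"
  shows "a \<otimes> b \<otimes> y = y \<otimes> (a \<otimes> b)"
proof -
  have "a \<otimes> b \<otimes> y = a \<otimes> (y \<otimes> b)" using assms by (simp add: m_assoc)
  also have "\<dots> = y \<otimes> (a \<otimes> b)" using a b y by (simp add: ay flip: m_assoc)
  finally show ?thesis .
qed

lemma commute_inv:
  "a \<in> carrier G \<Longrightarrow> y \<in> carrier G \<Longrightarrow> a \<otimes> y = y \<otimes> a \<Longrightarrow> inv a \<otimes> y = y \<otimes> inv a"
  by (metis inv_solve_left' inv_solve_right m_assoc m_closed inv_closed)

lemma center_subgroup: "subgroup (center G) G"
proof (rule subgroupI)
  have "\<one> \<in> center G"
    unfolding center_def by simp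
  then show "center G \<noteq> {}"
    by blast
next
  fix a b assume "a \<in> center G" and "b \<in> center G"
  then show "a \<otimes> b \<in> center G"
    unfolding center_def by (blast intro: commute_mult)
next
  fix a assume "a \<in> center G"
  then show "inv a \<in> center G"
    unfolding center_def by (blast intro: commute_inv)
qed (rule center_subset)

lemma center_normal: "center G \<lhd> G"
proof (rule normalI[OF center_subgroup], intro ballI)
  fix x assume "x \<in> carrier G"
  then show "center G #> x = x <# center G"
    unfolding r_coset_def l_coset_def center_def by auto
qed

lemma centralizer_inv:
  assumes x: "x \<in> carrier G"
  shows "centralizer G (inv x) = centralizer G x"
proof -
  have "y \<otimes> inv x = inv x \<otimes> y \<longleftrightarrow> y \<otimes> x = x \<otimes> y" if y: "y \<in> carrier G" for y
    using commute_inv[OF x y] commute_inv[OF inv_closed[OF x] y] x by (metis inv_inv)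
  then show ?thesis
    unfolding centralizer_def by blast
qed

lemma centralizer_center_mult:
  assumes z: "z \<in> center G" and x: "x \<in> carrier G"
  shows "centralizer G (z \<otimes> x) = centralizer G x"
proof -
  have zc: "z \<in> carrier G" and zy: "\<And>y. y \<in> carrier G \<Longrightarrow> z \<otimes> y = y \<otimes> z"
    using z unfolding center_def by auto
  have "y \<otimes> (z \<otimes> x) = (z \<otimes> x) \<otimes> y \<longleftrightarrow> y \<otimes> x = x \<otimes> y" if y: "y \<in> carrier G" for y
  proof -
    have "y \<otimes> (z \<otimes> x) = z \<otimes> (y \<otimes> x)" and "(z \<otimes> x) \<otimes> y = z \<otimes> (x \<otimes> y)"
      using y x zc zy by (metis m_assoc)+
    then show ?thesis using y x zc by simp
  qed
  then show ?thesis unfolding centralizer_def by auto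
qed

lemma centralizer_eq_carrier_iff:
  assumes "x \<in> carrier G"
  shows "centralizer G x = carrier G \<longleftrightarrow> x \<in> center G"
  using assms unfolding centralizer_def center_def by (auto simp: set_eq_iff) metis+

lemma centralizer_one: "centralizer G \<one> = carrier G"
  unfolding centralizer_def by auto

lemma centralizer_class_one: "centralizer_class G \<one> = center G"
  unfolding centralizer_class_def centralizer_one
  using centralizer_eq_carrier_iff center_subset by blast

lemma rcos_center_subset_centralizer_class:
  assumes "x \<in> carrier G"
  shows "center G #> x \<subseteq> centralizer_class G x"
  using assms centralizer_center_mult center_subset
  unfolding r_coset_def centralizer_class_def by auto

lemma centralizer_class_eq_rcos_center_if_regular:
  assumes fin: "finite (carrier G)" and reg: "noncentralizer_graph_regular G"
    and x: "x \<in> carrier G"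
  shows "centralizer_class G x = center G #> x"
proof -
  have "card (centralizer_class G x) = card (center G)"
    using card_centralizer_class_eq_if_regular[OF fin reg x one_closed]
    by (simp add: centralizer_class_one)
  also have "\<dots> = card (center G #> x)"
    using card_rcosets_equal[OF rcosetsI[OF center_subset x] center_subset] .
  finally show ?thesis
    using card_subset_eq[OF finite_subset[OF centralizer_class_subset fin]
        rcos_center_subset_centralizer_class[OF x]]
    by simp
qed

lemma square_in_center_if_regular:
  assumes fin: "finite (carrier G)" and reg: "noncentralizer_graph_regular G"
    and x: "x \<in> carrier G"
  shows "x \<otimes> x \<in> center G"
proof -
  interpret Z: subgroup "center G" G by (rule center_subgroup)
  have "inv x \<in> centralizer_class G x"
    unfolding centralizer_class_def using x centralizer_inv by auto
  then have "inv x \<in> center G #> x"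
    using centralizer_class_eq_rcos_center_if_regular[OF fin reg x] by simp
  then have "inv (inv x \<otimes> inv x) \<in> center G"
    using Z.rcos_module_imp[OF is_group x] by simp
  then show ?thesis
    using x by (simp add: inv_mult_group)
qed

lemma comm_group_if_squares_one:
  assumes sq: "\<And>x. x \<in> carrier G \<Longrightarrow> x \<otimes> x = \<one>"
  shows "comm_group G"
proof (rule group_comm_groupI)
  have inv_self: "inv x = x" if "x \<in> carrier G" for x
    using inv_equality[OF sq[OF that] that that] .
  fix x y assume "x \<in> carrier G" "y \<in> carrier G"
  then show "x \<otimes> y = y \<otimes> x"
    using inv_self[of "x \<otimes> y"] inv_self[of x] inv_self[of y] by (simp add: inv_mult_group)
qed

end

theorem theorem2p6:
  fixes G :: "('a, 'b) monoid_scheme"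
  assumes "group G"
    and "finite (carrier G)"
    and "\<not> comm_group G"
    and "noncentralizer_graph_regular G"
  shows "elementary_abelian_2_group (G Mod (center G))"
proof -
  interpret group G by fact
  interpret Z: normal "center G" G by (rule center_normal)
  interpret Q: group "G Mod center G" by (rule Z.factorgroup_is_group)
  have sq: "A \<otimes>\<^bsub>G Mod center G\<^esub> A = \<one>\<^bsub>G Mod center G\<^esub>"
    if A_carrier: "A \<in> carrier (G Mod center G)" for A
  proof -
    obtain a where a: "a \<in> carrier G" and A: "A = center G #>\<^bsub>G\<^esub> a"
      using A_carrier by (auto simp: carrier_FactGroup)
    have "A \<otimes>\<^bsub>G Mod center G\<^esub> A = center G #>\<^bsub>G\<^esub> (a \<otimes>\<^bsub>G\<^esub> a)"
      using a by (simp add: A Z.rcos_sum)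
    also have "\<dots> = center G"
      using Z.rcos_const[OF is_group square_in_center_if_regular[OF assms(2,4) a]] .
    finally show ?thesis by simp
  qed
  have "comm_group (G Mod center G)"
    using sq by (rule Q.comm_group_if_squares_one)
  moreover have "A [^]\<^bsub>G Mod center G\<^esub> (2::nat) = \<one>\<^bsub>G Mod center G\<^esub>"
    if "A \<in> carrier (G Mod center G)" for A
    using that sq by (simp add: Q.nat_pow_two)
  ultimately show ?thesis
    unfolding elementary_abelian_2_group_def by blast
qed

end
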